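(* Let $t$ be an integer with $m=2t+1\geq 11$, $n=2^m+1$, $\delta_1=\frac{n}{3}$ and $\delta_2=\frac{n-3}{6}$. If $x$ is an odd integer with $\delta_2<x\leq n-1$ and $x\neq\delta_1$, then $x$ is not a coset leader modulo $n$.
   Context: For $n=2^m+1$ and an integer $x$, the 2-cyclotomic coset of $x$ modulo $n$ is $C_x=\{x\cdot 2^{j} \bmod n : j\geq 0\}\subseteq\{0,1,\dots,n-1\}$. For $0\leq x\leq n-1$, "$x$ is a coset leader" means that $x$ is the smallest element of $C_x$. *)

theory Defs
  imports Complex_Main
begin

definition cyc_coset :: "nat \<Rightarrow> nat \<Rightarrow> nat set" where
  "cyc_coset n x = {x * 2 ^ j mod n | j. True}"

definition coset_leader :: "nat \<Rightarrow> nat \<Rightarrow> bool" where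
  "coset_leader n x \<longleftrightarrow> x \<le> n - 1 \<and> (\<forall>y \<in> cyc_coset n x. x \<le> y)"

end

theory Submission
  imports Defs
begin

text \<open>Since \<open>2^m \<equiv> -1 (mod n)\<close>, the coset of a leader \<open>x\<close> is closed under \<open>y \<mapsto> n - y\<close>,
  so it lies in \<open>[x, n - x]\<close>; for \<open>6x > n\<close> this is inside \<open>(n/6, 5n/6)\<close>. There, doubling
  modulo \<open>n\<close> moves every point other than \<open>n/3\<close> and \<open>2n/3\<close> (which lie in the coset only
  when \<open>x = n/3\<close>) into or out of the middle third \<open>(n/3, 2n/3)\<close>, alternately. After the odd
  number \<open>m\<close> of doublings \<open>x\<close> becomes \<open>n - x\<close>, which lies in the middle third exactly when
  \<open>x\<close> does: a contradiction.\<close>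

lemma two_pow_odd_mod_6:
  assumes "odd k"
  shows "(2::nat) ^ k mod 6 = 2"
proof -
  obtain i where k: "k = 2 * i + 1" using assms oddE by blast
  have "(2::nat) ^ (2 * i + 1) mod 6 = 2"
  proof (induction i)
    case (Suc i)
    have "(2::nat) ^ (2 * Suc i + 1) mod 6 = 4 * (2 ^ (2 * i + 1) mod 6) mod 6"
      by (simp add: mod_mult_right_eq)
    then show ?case using Suc.IH by simp
  qed simp
  then show ?thesis using k by simp
qed

lemma mult_two_pow_mod_Suc_two_pow:
  fixes a m :: nat
  defines "n \<equiv> 2 ^ m + 1"
  assumes "a mod n \<noteq> 0"
  shows "a * 2 ^ m mod n = n - a mod n"
proof -
  define r where "r = a mod n"
  have "r < n" "r \<noteq> 0" using assms(2) by (simp_all add: r_def n_def)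
  have "r * 2 ^ m = (r - 1) * n + (n - r)"
    using \<open>r < n\<close> \<open>r \<noteq> 0\<close> by (cases r) (simp_all add: n_def algebra_simps)
  then have "r * 2 ^ m mod n = (n - r) mod n"
    by (simp only: mod_mult_self3)
  also have "\<dots> = n - r"
    using \<open>r < n\<close> \<open>r \<noteq> 0\<close> by simp
  finally have "r * 2 ^ m mod n = n - r" .
  then show ?thesis by (simp add: r_def mod_mult_left_eq)
qed

lemma odd_dvd_mult_two_pow_iff:
  fixes n a :: nat
  assumes "odd n"
  shows "n dvd a * 2 ^ j \<longleftrightarrow> n dvd a"
  using assms by (simp add: coprime_dvd_mult_left_iff)

lemma dvd_mult_mod_imp_dvd_mult:
  fixes n b x :: nat
  assumes "odd n" and "n dvd b * (x * 2 ^ j mod n)"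
  shows "n dvd b * x"
proof -
  have "n dvd b * (x * 2 ^ j)"
    using assms(2) by (simp add: dvd_eq_mod_eq_0 mod_mult_right_eq)
  then show ?thesis
    using odd_dvd_mult_two_pow_iff[OF assms(1), of "b * x" j] by (simp add: mult.assoc)
qed

lemma coset_leader_le_mult_two_pow_mod:
  assumes "coset_leader n x"
  shows "x \<le> x * 2 ^ j mod n"
  using assms unfolding coset_leader_def cyc_coset_def by blast

lemma coset_leader_mult_two_pow_add_mod:
  fixes m x :: nat
  defines "n \<equiv> 2 ^ m + 1"
  assumes "0 < m" and "coset_leader n x" and "0 < x"
  shows "x * 2 ^ (j + m) mod n = n - x * 2 ^ j mod n"
proof -
  have "x < n" using assms(3) unfolding coset_leader_def n_def by simp
  have "odd n" unfolding n_def using \<open>0 < m\<close> by simp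
  moreover have "\<not> n dvd x" using \<open>0 < x\<close> \<open>x < n\<close> nat_dvd_not_less by blast
  ultimately have "x * 2 ^ j mod n \<noteq> 0"
    using odd_dvd_mult_two_pow_iff[of n x j] by (simp add: mod_eq_0_iff_dvd)
  then show ?thesis
    using mult_two_pow_mod_Suc_two_pow[of "x * 2 ^ j" m]
    by (simp add: n_def power_add mult.assoc)
qed

lemma coset_leader_Suc_two_pow_bounds:
  fixes m x :: nat
  defines "n \<equiv> 2 ^ m + 1"
  assumes "0 < m" and "coset_leader n x" and "0 < x"
  shows "x \<le> x * 2 ^ j mod n" and "x \<le> n - x * 2 ^ j mod n"
  using coset_leader_le_mult_two_pow_mod[OF assms(3), of j]
    coset_leader_le_mult_two_pow_mod[OF assms(3), of "j + m"]
    coset_leader_mult_two_pow_add_mod[OF assms(2-4)[unfolded n_def], of j]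
  by (simp_all add: n_def)

definition middle_third :: "nat \<Rightarrow> nat \<Rightarrow> bool" where
  "middle_third n w \<longleftrightarrow> n < 3 * w \<and> 3 * w < 2 * n"

lemma middle_third_double_mod:
  fixes n z :: nat
  assumes "n < 6 * z" and "6 * z < 5 * n" and "3 * z \<noteq> n" and "3 * z \<noteq> 2 * n"
  shows "middle_third n (2 * z mod n) \<longleftrightarrow> \<not> middle_third n z"
proof (cases "2 * z < n")
  case True
  then show ?thesis using assms unfolding middle_third_def by auto
next
  case False
  then have "2 * z mod n = 2 * z - n" using assms(2) by (simp add: le_mod_geq)
  then show ?thesis using assms False unfolding middle_third_def by auto
qed

lemma alternating_iff_even:
  assumes "\<And>j. P (Suc j) \<longleftrightarrow> \<not> P j"
  shows "P j \<longleftrightarrow> (P 0 \<longleftrightarrow> even j)"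
  by (induction j) (simp_all add: assms)

lemma dvd_three_mult_imp_eq:
  fixes n x :: nat
  assumes "n dvd 3 * x" and "0 < x" and "2 * x \<le> n"
  shows "3 * x = n"
proof -
  obtain c where c: "3 * x = n * c" using assms(1) ..
  with assms(3) have "n * (2 * c) \<le> n * 3" by linarith
  then have "2 * c \<le> 3" using assms(2,3) by simp
  moreover have "c \<noteq> 0" using c assms(2) by (cases c) simp_all
  ultimately show ?thesis using c by (cases c) simp_all
qed

lemma coset_leader_middle_third_alternates:
  fixes m x :: nat
  defines "n \<equiv> 2 ^ m + 1"
  assumes "0 < m" and "coset_leader n x" and "n < 6 * x" and "3 * x \<noteq> n"
  shows "middle_third n (x * 2 ^ Suc j mod n) \<longleftrightarrow> \<not> middle_third n (x * 2 ^ j mod n)"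
proof -
  define z where "z = x * 2 ^ j mod n"
  have "0 < x" "x < n" using assms(3,4) unfolding coset_leader_def n_def by auto
  note bounds = coset_leader_Suc_two_pow_bounds[OF assms(2) assms(3)[unfolded n_def] \<open>0 < x\<close>,
      folded n_def]
  have "2 * x \<le> n" using bounds(2)[of 0] \<open>x < n\<close> by simp
  have "odd n" unfolding n_def using \<open>0 < m\<close> by simp
  have "\<not> n dvd 3 * z"
    using dvd_mult_mod_imp_dvd_mult[OF \<open>odd n\<close>, of 3 x j] dvd_three_mult_imp_eq
      \<open>0 < x\<close> \<open>2 * x \<le> n\<close> assms(5) unfolding z_def by blast
  then have "3 * z \<noteq> n" "3 * z \<noteq> 2 * n" by auto
  moreover have "n < 6 * z" "6 * z < 5 * n"
    using bounds[of j] assms(4) unfolding z_def by arith+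
  moreover have "x * 2 ^ Suc j mod n = 2 * z mod n"
    unfolding z_def by (simp add: mod_mult_right_eq mult.commute mult.left_commute)
  ultimately show ?thesis using middle_third_double_mod unfolding z_def by simp
qed

lemma not_coset_leader_if_six_mult_gt:
  fixes m x :: nat
  defines "n \<equiv> 2 ^ m + 1"
  assumes "odd m" and "n < 6 * x" and "3 * x \<noteq> n"
  shows "\<not> coset_leader n x"
proof
  assume leader: "coset_leader n x"
  have "0 < m" "0 < x" "x < n"
    using \<open>odd m\<close> assms(3) leader unfolding coset_leader_def n_def by (auto intro: odd_pos)
  let ?P = "\<lambda>j. middle_third n (x * 2 ^ j mod n)"
  have "?P m \<longleftrightarrow> \<not> ?P 0"
    using alternating_iff_even[of ?P m] \<open>odd m\<close>
      coset_leader_middle_third_alternates[OF \<open>0 < m\<close> leader[unfolded n_def]] assms(3,4)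
    unfolding n_def by blast
  moreover have "x * 2 ^ m mod n = n - x"
    using coset_leader_mult_two_pow_add_mod[OF \<open>0 < m\<close> leader[unfolded n_def] \<open>0 < x\<close>, of 0]
      \<open>x < n\<close> unfolding n_def by simp
  ultimately show False using \<open>x < n\<close> unfolding middle_third_def by auto
qed

theorem lemma3p4:
  fixes t :: int and m n x :: nat
  assumes "int m = 2 * t + 1" and "m \<ge> 11" and "n = 2 ^ m + 1"
    and "odd x"
    and "(of_nat x :: rat) > ((of_nat n :: rat) - 3) / 6" and "x \<le> n - 1"
    and "(of_nat x :: rat) \<noteq> (of_nat n :: rat) / 3"
  shows "\<not> coset_leader n x"
proof -
  have "odd m" using assms(1) by presburger
  then have "n mod 6 = 3" using two_pow_odd_mod_6[of m] assms(3) by presburger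
  moreover have "rat_of_nat n < rat_of_nat (6 * x + 3)" using assms(5) by (simp add: field_simps)
  then have "n < 6 * x + 3" by (simp only: of_nat_less_iff)
  ultimately have "n < 6 * x" by presburger
  have "3 * x \<noteq> n"
  proof
    assume "3 * x = n"
    then show False using assms(7) by (simp flip: \<open>3 * x = n\<close>)
  qed
  show ?thesis
    using not_coset_leader_if_six_mult_gt \<open>odd m\<close> \<open>n < 6 * x\<close> \<open>3 * x \<noteq> n\<close>
    unfolding assms(3) by blast
qed

end
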